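(* Let $E$ be a Banach lattice, $P: E \to \mathbb{R}$ a regular polynomial, and $(x_m)$ a disjoint, almost limited, weakly null sequence in $E$. Then $\lim_m P(x_m) = 0$.
   Context: A $k$-homogeneous continuous polynomial $P: E \to \mathbb{R}$ is positive if its associated symmetric $k$-linear form $A$ satisfies $A(x_1,\dots,x_k) \ge 0$ whenever all $x_i \ge 0$; a polynomial is a finite sum of homogeneous continuous polynomials, and it is regular if it is a difference of two positive polynomials (sums of positive homogeneous polynomials). A bounded set $B \subset E$ (here $\{x_m\}$) is almost limited if every disjoint weak* null sequence $(x_n')$ in $E'$ converges uniformly to zero on $B$. *)

theory Defs
  imports "HOL-Analysis.Analysis"
begin

class banach_lattice = banach + lattice +
  assumes bl_add_mono: "x \<le> y \<Longrightarrow> x + z \<le> y + z"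
    and bl_scaleR_nonneg: "0 \<le> x \<Longrightarrow> 0 \<le> c \<Longrightarrow> 0 \<le> c *\<^sub>R x"
    and bl_norm_mono: "sup x (- x) \<le> sup y (- y) \<Longrightarrow> norm x \<le> norm y"

definition lat_abs :: "'a::banach_lattice \<Rightarrow> 'a" where
  "lat_abs x = sup x (- x)"

definition disjoint_seq :: "(nat \<Rightarrow> 'a::banach_lattice) \<Rightarrow> bool" where
  "disjoint_seq x \<longleftrightarrow> (\<forall>n m. n \<noteq> m \<longrightarrow> inf (lat_abs (x n)) (lat_abs (x m)) = 0)"

text \<open>Elements of E' are bounded linear functionals. Modulus in E' (Riesz--Kantorovich):
  |f|(x) = sup { f y : |y| \<le> x } for x \<ge> 0.\<close>
definition dual_abs :: "('a::banach_lattice \<Rightarrow> real) \<Rightarrow> 'a \<Rightarrow> real" where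
  "dual_abs f x = (SUP y\<in>{y. lat_abs y \<le> x}. f y)"

text \<open>Infimum in E' (Riesz--Kantorovich): (f \<and> g)(x) = inf { f y + g (x - y) : 0 \<le> y \<le> x }
  for x \<ge> 0.  Two functionals f, g are disjoint iff |f| \<and> |g| = 0, i.e. vanishes on the
  positive cone.\<close>
definition dual_disjoint :: "('a::banach_lattice \<Rightarrow> real) \<Rightarrow> ('a \<Rightarrow> real) \<Rightarrow> bool" where
  "dual_disjoint f g \<longleftrightarrow>
     (\<forall>x. 0 \<le> x \<longrightarrow> (INF y\<in>{y. 0 \<le> y \<and> y \<le> x}. dual_abs f y + dual_abs g (x - y)) = 0)"

definition dual_disjoint_seq :: "(nat \<Rightarrow> 'a::banach_lattice \<Rightarrow> real) \<Rightarrow> bool" where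
  "dual_disjoint_seq f \<longleftrightarrow> (\<forall>n m. n \<noteq> m \<longrightarrow> dual_disjoint (f n) (f m))"

definition weak_star_null :: "(nat \<Rightarrow> 'a::real_normed_vector \<Rightarrow> real) \<Rightarrow> bool" where
  "weak_star_null f \<longleftrightarrow> (\<forall>x. (\<lambda>n. f n x) \<longlonglongrightarrow> 0)"

definition weakly_null :: "(nat \<Rightarrow> 'a::real_normed_vector) \<Rightarrow> bool" where
  "weakly_null x \<longleftrightarrow> (\<forall>f :: 'a \<Rightarrow> real. bounded_linear f \<longrightarrow> (\<lambda>m. f (x m)) \<longlonglongrightarrow> 0)"

definition almost_limited :: "'a::banach_lattice set \<Rightarrow> bool" where
  "almost_limited B \<longleftrightarrow> bounded B \<and>
     (\<forall>f :: nat \<Rightarrow> 'a \<Rightarrow> real. (\<forall>n. bounded_linear (f n)) \<longrightarrow> dual_disjoint_seq f \<longrightarrow>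
        weak_star_null f \<longrightarrow> (\<forall>e>0. \<forall>\<^sub>F n in sequentially. \<forall>b\<in>B. \<bar>f n b\<bar> < e))"

definition sym_kform :: "nat \<Rightarrow> ('a::real_normed_vector list \<Rightarrow> real) \<Rightarrow> bool" where
  "sym_kform k A \<longleftrightarrow>
     (\<forall>xs i. length xs = k \<longrightarrow> i < k \<longrightarrow> linear (\<lambda>y. A (xs[i := y]))) \<and>
     (\<exists>C. \<forall>xs. length xs = k \<longrightarrow> \<bar>A xs\<bar> \<le> C * prod_list (map norm xs)) \<and>
     (\<forall>xs ys. length xs = k \<longrightarrow> mset ys = mset xs \<longrightarrow> A ys = A xs)"

definition positive_kform :: "nat \<Rightarrow> ('a::banach_lattice list \<Rightarrow> real) \<Rightarrow> bool" where
  "positive_kform k A \<longleftrightarrow> sym_kform k A \<and>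
     (\<forall>xs. length xs = k \<longrightarrow> (\<forall>x\<in>set xs. 0 \<le> x) \<longrightarrow> 0 \<le> A xs)"

definition positive_hom_poly :: "('a::banach_lattice \<Rightarrow> real) \<Rightarrow> bool" where
  "positive_hom_poly P \<longleftrightarrow>
     (\<exists>k A. 1 \<le> k \<and> positive_kform k A \<and> (\<forall>x. P x = A (replicate k x)))"

definition positive_poly :: "('a::banach_lattice \<Rightarrow> real) \<Rightarrow> bool" where
  "positive_poly P \<longleftrightarrow>
     (\<exists>Ps. (\<forall>Q\<in>set Ps. positive_hom_poly Q) \<and> (\<forall>x. P x = (\<Sum>Q\<leftarrow>Ps. Q x)))"

definition regular_poly :: "('a::banach_lattice \<Rightarrow> real) \<Rightarrow> bool" where
  "regular_poly P \<longleftrightarrow>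
     (\<exists>P1 P2. positive_poly P1 \<and> positive_poly P2 \<and> (\<forall>x. P x = P1 x - P2 x))"

end

theory Submission
  imports Defs "HOL-Library.Lattice_Algebras"
begin

text \<open>Splitting \<open>P\<close> into positive homogeneous parts and using
  \<open>\<bar>A(y\<^sub>1, \<dots>, y\<^sub>k)\<bar> \<le> A(|y\<^sub>1|, \<dots>, |y\<^sub>k|)\<close> for a positive symmetric form \<open>A\<close>, it suffices
  to show \<open>A(|x\<^sub>n|, \<dots>, |x\<^sub>n|) \<rightarrow> 0\<close>. Freezing all but the last argument reduces this, by
  induction on \<open>k\<close>, to \<open>h\<^sub>n(|x\<^sub>n|) \<rightarrow> 0\<close> for positive functionals \<open>h\<^sub>n\<close> that are either
  constant (\<open>k = 1\<close>) or tend to \<open>0\<close> pointwise on the positive cone.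

  For these, restrict \<open>h\<^sub>n\<close> to the band generated by \<open>x\<^sub>n\<^sup>+\<close>. The restrictions are pairwise
  disjoint in \<open>E'\<close> because the \<open>x\<^sub>n\<^sup>+\<close> are, and weak* null: in the constant case their
  values at \<open>y \<ge> 0\<close> sum to at most \<open>h(y)\<close>. As the \<open>n\<close>-th one takes the value \<open>h\<^sub>n(x\<^sub>n\<^sup>+)\<close>
  at \<open>x\<^sub>n\<close>, almost limitedness yields \<open>h\<^sub>n(x\<^sub>n\<^sup>+) \<rightarrow> 0\<close>, and likewise \<open>h\<^sub>n(x\<^sub>n\<^sup>-) \<rightarrow> 0\<close>.\<close>

instance banach_lattice \<subseteq> lattice_ab_group_add
  by standard (metis add.commute bl_add_mono)

instance banach_lattice \<subseteq> ordered_real_vector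
proof
  fix x y :: 'a and a :: real
  assume "x \<le> y" "0 \<le> a"
  then show "a *\<^sub>R x \<le> a *\<^sub>R y"
    using bl_scaleR_nonneg[of "y - x" a] by (simp add: scaleR_diff_right)
next
  fix a b :: real and x :: 'a
  assume "a \<le> b" "0 \<le> x"
  then show "a *\<^sub>R x \<le> b *\<^sub>R x"
    using bl_scaleR_nonneg[of x "b - a"] by (simp add: scaleR_diff_left)
qed

lemma scaleR_inf_distrib:
  fixes a b :: "'a::banach_lattice"
  assumes "0 \<le> c"
  shows "c *\<^sub>R inf a b = inf (c *\<^sub>R a) (c *\<^sub>R b)"
proof (cases "c = 0")
  case False
  with assms have c: "0 < c" by simp
  have "(1 / c) *\<^sub>R inf (c *\<^sub>R a) (c *\<^sub>R b) \<le> inf a b"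
    using scaleR_left_mono[OF inf_le1, of "1 / c" "c *\<^sub>R a" "c *\<^sub>R b"]
      scaleR_left_mono[OF inf_le2, of "1 / c" "c *\<^sub>R a" "c *\<^sub>R b"] c
    by (simp add: le_inf_iff)
  then have "inf (c *\<^sub>R a) (c *\<^sub>R b) \<le> c *\<^sub>R inf a b"
    using scaleR_left_mono[of _ "inf a b" c] c by fastforce
  moreover have "c *\<^sub>R inf a b \<le> inf (c *\<^sub>R a) (c *\<^sub>R b)"
    using assms by (simp add: scaleR_left_mono)
  ultimately show ?thesis by (rule antisym[rotated])
qed simp

lemma pprt_diff_neg_nprt: "pprt a - (- nprt a) = (a::'a::lattice_ab_group_add)"
  by (metis diff_minus_eq_add prts)

lemma lat_abs_nonneg: "0 \<le> lat_abs (a::'a::banach_lattice)"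
  using add_mono[of a "sup a (- a)" "- a" "sup a (- a)"] by (simp add: lat_abs_def)

lemma lat_abs_eq_prts: "lat_abs (a::'a::banach_lattice) = pprt a - nprt a"
proof -
  have "sup (sup a (- a)) 0 = sup a (- a)"
    using lat_abs_nonneg[of a] unfolding lat_abs_def by (rule sup_absorb1)
  then show ?thesis
    by (simp add: lat_abs_def add_sup_inf_distribs ac_simps pprt_def nprt_def)
qed

lemma lat_abs_eq_self: "0 \<le> (a::'a::banach_lattice) \<Longrightarrow> lat_abs a = a"
  by (simp add: lat_abs_eq_prts)

lemma norm_lat_abs: "norm (lat_abs a) = norm a"
proof -
  have "sup (lat_abs a) (- lat_abs a) = sup a (- a)"
    using lat_abs_eq_self[OF lat_abs_nonneg, of a] by (simp add: lat_abs_def)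
  then show ?thesis
    using bl_norm_mono[of a "lat_abs a"] bl_norm_mono[of "lat_abs a" a] by simp
qed

lemma pprt_le_lat_abs: "pprt (a::'a::banach_lattice) \<le> lat_abs a"
  by (simp add: lat_abs_eq_prts)

lemma neg_nprt_le_lat_abs: "- nprt (a::'a::banach_lattice) \<le> lat_abs a"
  by (simp add: lat_abs_eq_prts)

lemma inf_pprt_neg_nprt: "inf (pprt (a::'a::banach_lattice)) (- nprt a) = 0"
proof -
  have "sup (pprt a) (- nprt a) = sup (sup a (- a)) 0"
    by (simp add: pprt_def nprt_def neg_inf_eq_sup ac_simps)
  also have "\<dots> = pprt a + - nprt a"
    using lat_abs_nonneg[of a] by (simp add: lat_abs_def sup_absorb1 flip: lat_abs_eq_prts)
  finally show ?thesis
    using add_eq_inf_sup[of "pprt a" "- nprt a"] by simp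
qed

lemma inf_add_le:
  fixes a b c :: "'a::lattice_ab_group_add"
  assumes "0 \<le> a" "0 \<le> b" "0 \<le> c"
  shows "inf (a + b) c \<le> inf a c + inf b c"
proof -
  define d where "d = inf (a + b) c"
  have "d - inf b c = sup (d - b) (d - c)"
    by (simp add: diff_inf_eq_sup add_sup_distrib_left)
  also have "\<dots> \<le> a"
  proof (rule sup_least)
    show "d - b \<le> a" by (simp add: d_def diff_le_eq le_infI1)
    show "d - c \<le> a" using assms(1) by (simp add: d_def order_trans[of _ 0])
  qed
  finally have le_a: "d - inf b c \<le> a" .
  have "d - inf b c \<le> d"
    using assms(2,3) by (simp only: diff_le_eq le_add_same_cancel1 le_inf_iff)
  then have "d - inf b c \<le> c"
    by (simp add: d_def le_infI2)
  with le_a have "d - inf b c \<le> inf a c" by simp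
  then show ?thesis unfolding d_def by (simp only: diff_le_eq)
qed

lemma inf_eq_zero_mono:
  fixes a b a' b' :: "'a::lattice_ab_group_add"
  assumes "0 \<le> a'" "a' \<le> a" "0 \<le> b'" "b' \<le> b" "inf a b = 0"
  shows "inf a' b' = 0"
  using inf_mono[OF assms(2,4)] assms by (simp add: antisym)

lemma inf_scaleR_eq_zero:
  fixes a b :: "'a::banach_lattice"
  assumes a: "0 \<le> a" and b: "0 \<le> b" and disj: "inf a b = 0" and st: "0 \<le> s" "0 \<le> t"
  shows "inf (s *\<^sub>R a) (t *\<^sub>R b) = 0"
proof -
  define m where "m = max s t"
  have "m *\<^sub>R inf a b = 0"
    using disj by simp
  then have m_disj: "inf (m *\<^sub>R a) (m *\<^sub>R b) = 0"
    using st by (simp add: m_def scaleR_inf_distrib)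
  have "s *\<^sub>R a \<le> m *\<^sub>R a" "t *\<^sub>R b \<le> m *\<^sub>R b"
    using a b by (simp_all add: m_def scaleR_right_mono)
  then show ?thesis
    using inf_eq_zero_mono[OF scaleR_nonneg_nonneg[OF st(1) a] _ scaleR_nonneg_nonneg[OF st(2) b] _ m_disj]
    by blast
qed

section \<open>Restricting a positive functional to a band\<close>

definition positive_functional :: "('a::banach_lattice \<Rightarrow> real) \<Rightarrow> bool" where
  "positive_functional h \<longleftrightarrow> bounded_linear h \<and> (\<forall>y. 0 \<le> y \<longrightarrow> 0 \<le> h y)"

lemma positive_functional_nonneg: "positive_functional h \<Longrightarrow> 0 \<le> y \<Longrightarrow> 0 \<le> h y"
  by (simp add: positive_functional_def)

lemma positive_functional_bounded_linear: "positive_functional h \<Longrightarrow> bounded_linear h"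
  by (simp add: positive_functional_def)

lemma positive_functional_linear: "positive_functional h \<Longrightarrow> linear h"
  by (simp add: positive_functional_def bounded_linear.linear)

lemma positive_functional_mono:
  assumes "positive_functional h" "a \<le> b"
  shows "h a \<le> h b"
  using positive_functional_nonneg[OF assms(1), of "b - a"] assms
    linear_diff[OF positive_functional_linear[OF assms(1)]]
  by simp

lemma linear_abs_le_dominating:
  fixes \<phi> \<psi> :: "'a::banach_lattice \<Rightarrow> real"
  assumes "linear \<phi>" "linear \<psi>" and dom: "\<And>c. 0 \<le> c \<Longrightarrow> \<bar>\<phi> c\<bar> \<le> \<psi> c"
    and "lat_abs a \<le> b"
  shows "\<bar>\<phi> a\<bar> \<le> \<psi> b"
proof -
  have "\<phi> a = \<phi> (pprt a) - \<phi> (- nprt a)"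
    using linear_add[OF assms(1), of "pprt a" "nprt a"] linear_neg[OF assms(1), of "nprt a"]
    by (simp flip: prts)
  then have "\<bar>\<phi> a\<bar> \<le> \<psi> (pprt a) + \<psi> (- nprt a)"
    using dom[of "pprt a"] dom[of "- nprt a"] by simp
  also have "\<dots> = \<psi> (lat_abs a)"
    by (simp add: lat_abs_eq_prts linear_add[OF assms(2), symmetric])
  also have "\<dots> \<le> \<psi> b"
    using dom[of "b - lat_abs a"] assms(4) linear_diff[OF assms(2)] by simp
  finally show ?thesis .
qed

lemma positive_functional_le_of_lat_abs_le:
  assumes "positive_functional h" "lat_abs a \<le> b"
  shows "h a \<le> h b"
proof -
  have "\<bar>h a\<bar> \<le> h b"
    by (rule linear_abs_le_dominating[OF positive_functional_linear[OF assms(1)]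
          positive_functional_linear[OF assms(1)] _ assms(2)])
      (simp add: positive_functional_nonneg[OF assms(1)])
  then show ?thesis by simp
qed

text \<open>For \<open>y \<ge> 0\<close>, \<open>band_restrict_pos h v y\<close> is the value of \<open>h\<close> on the component of \<open>y\<close> in the
  band generated by \<open>v\<close>, approximated from below by the truncations \<open>inf y (s *\<^sub>R v)\<close>;
  \<open>band_restrict h v\<close> is its linear extension, the restriction of \<open>h\<close> to that band.\<close>

definition band_restrict_pos :: "('a::banach_lattice \<Rightarrow> real) \<Rightarrow> 'a \<Rightarrow> 'a \<Rightarrow> real" where
  "band_restrict_pos h v y = (SUP s\<in>{0..}. h (inf y (s *\<^sub>R v)))"

definition band_restrict :: "('a::banach_lattice \<Rightarrow> real) \<Rightarrow> 'a \<Rightarrow> 'a \<Rightarrow> real" where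
  "band_restrict h v y = band_restrict_pos h v (pprt y) - band_restrict_pos h v (- nprt y)"

context
  fixes h :: "'a::banach_lattice \<Rightarrow> real" and v :: 'a
  assumes h: "positive_functional h" and v: "0 \<le> v"
begin

lemma band_restrict_pos_bdd: "0 \<le> y \<Longrightarrow> bdd_above ((\<lambda>s. h (inf y (s *\<^sub>R v))) ` {0..})"
  by (rule bdd_aboveI[where M = "h y"]) (auto intro: positive_functional_mono[OF h])

lemma band_restrict_pos_le: "0 \<le> y \<Longrightarrow> band_restrict_pos h v y \<le> h y"
  unfolding band_restrict_pos_def
  by (rule cSUP_least) (auto intro: positive_functional_mono[OF h])

lemma band_restrict_pos_ge:
  "0 \<le> y \<Longrightarrow> 0 \<le> s \<Longrightarrow> h (inf y (s *\<^sub>R v)) \<le> band_restrict_pos h v y"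
  unfolding band_restrict_pos_def by (rule cSUP_upper) (auto intro: band_restrict_pos_bdd)

lemma band_restrict_pos_nonneg: "0 \<le> y \<Longrightarrow> 0 \<le> band_restrict_pos h v y"
  using band_restrict_pos_ge[of y 0] positive_functional_nonneg[OF h, of "inf y 0"] by simp

lemma band_restrict_pos_approx:
  assumes "0 \<le> y" "0 < e"
  obtains s where "0 \<le> s" "band_restrict_pos h v y - e < h (inf y (s *\<^sub>R v))"
  using less_cSUP_iff[OF _ band_restrict_pos_bdd[OF assms(1)], of "band_restrict_pos h v y - e"]
    assms(2) that
  by (auto simp: band_restrict_pos_def)

lemma band_restrict_pos_eq_self:
  assumes "0 \<le> y" "0 \<le> s" "y \<le> s *\<^sub>R v"
  shows "band_restrict_pos h v y = h y"
  using band_restrict_pos_ge[OF assms(1,2)] band_restrict_pos_le[OF assms(1)] assms(3)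
  by (simp add: inf_absorb1)

lemma band_restrict_pos_disjoint:
  assumes "0 \<le> y" "inf y v = 0"
  shows "band_restrict_pos h v y = 0"
proof -
  have "h (inf y (s *\<^sub>R v)) = 0" if "0 \<le> s" for s
    using inf_scaleR_eq_zero[OF assms(1) v assms(2), of 1 s] that
      linear_0[OF positive_functional_linear[OF h]]
    by simp
  then show ?thesis by (simp add: band_restrict_pos_def)
qed

lemma band_restrict_pos_zero: "band_restrict_pos h v 0 = 0"
  by (rule band_restrict_pos_disjoint) (simp_all add: v inf_absorb1)

lemma band_restrict_pos_add_le:
  assumes a: "0 \<le> a" and b: "0 \<le> b"
  shows "band_restrict_pos h v (a + b) \<le> band_restrict_pos h v a + band_restrict_pos h v b"
  unfolding band_restrict_pos_def[of h v "a + b"]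
proof (rule cSUP_least)
  fix s :: real
  assume s: "s \<in> {0..}"
  then have "h (inf (a + b) (s *\<^sub>R v)) \<le> h (inf a (s *\<^sub>R v) + inf b (s *\<^sub>R v))"
    using a b v by (intro positive_functional_mono[OF h] inf_add_le) (auto simp: scaleR_nonneg_nonneg)
  also have "\<dots> = h (inf a (s *\<^sub>R v)) + h (inf b (s *\<^sub>R v))"
    by (rule linear_add[OF positive_functional_linear[OF h]])
  also have "\<dots> \<le> band_restrict_pos h v a + band_restrict_pos h v b"
    using s by (intro add_mono band_restrict_pos_ge[OF a] band_restrict_pos_ge[OF b]) auto
  finally show "h (inf (a + b) (s *\<^sub>R v)) \<le> band_restrict_pos h v a + band_restrict_pos h v b" .
qed simp

lemma band_restrict_pos_add_ge:
  assumes a: "0 \<le> a" and b: "0 \<le> b"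
  shows "band_restrict_pos h v a + band_restrict_pos h v b \<le> band_restrict_pos h v (a + b)"
proof (rule field_le_epsilon)
  fix e :: real
  assume "0 < e"
  then obtain s t where st: "0 \<le> s" "0 \<le> t"
    and s: "band_restrict_pos h v a - e / 2 < h (inf a (s *\<^sub>R v))"
    and t: "band_restrict_pos h v b - e / 2 < h (inf b (t *\<^sub>R v))"
    using band_restrict_pos_approx[OF a] band_restrict_pos_approx[OF b]
    by (metis half_gt_zero)
  define m where "m = max s t"
  have "h (inf a (s *\<^sub>R v)) + h (inf b (t *\<^sub>R v)) \<le> h (inf a (m *\<^sub>R v)) + h (inf b (m *\<^sub>R v))"
    using v by (intro add_mono positive_functional_mono[OF h] inf_mono order_refl scaleR_right_mono)
      (simp_all add: m_def)
  also have "\<dots> = h (inf a (m *\<^sub>R v) + inf b (m *\<^sub>R v))"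
    by (rule linear_add[OF positive_functional_linear[OF h], symmetric])
  also have "\<dots> \<le> h (inf (a + b) ((2 * m) *\<^sub>R v))"
  proof (rule positive_functional_mono[OF h], rule le_infI)
    show "inf a (m *\<^sub>R v) + inf b (m *\<^sub>R v) \<le> a + b"
      by (rule add_mono) simp_all
    have "inf a (m *\<^sub>R v) + inf b (m *\<^sub>R v) \<le> m *\<^sub>R v + m *\<^sub>R v"
      by (rule add_mono) simp_all
    then show "inf a (m *\<^sub>R v) + inf b (m *\<^sub>R v) \<le> (2 * m) *\<^sub>R v"
      by (metis mult_2 scaleR_add_left)
  qed
  also have "\<dots> \<le> band_restrict_pos h v (a + b)"
    using a b st by (intro band_restrict_pos_ge) (auto simp: m_def)
  finally show "band_restrict_pos h v a + band_restrict_pos h v b \<le> band_restrict_pos h v (a + b) + e"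
    using s t by simp
qed

lemma band_restrict_pos_add:
  "0 \<le> a \<Longrightarrow> 0 \<le> b \<Longrightarrow>
    band_restrict_pos h v (a + b) = band_restrict_pos h v a + band_restrict_pos h v b"
  by (intro antisym band_restrict_pos_add_le band_restrict_pos_add_ge)

lemma band_restrict_pos_scaleR_ge:
  assumes c: "0 < c" and a: "0 \<le> a"
  shows "c * band_restrict_pos h v a \<le> band_restrict_pos h v (c *\<^sub>R a)"
proof -
  have "band_restrict_pos h v a \<le> band_restrict_pos h v (c *\<^sub>R a) / c"
    unfolding band_restrict_pos_def[of h v a]
  proof (rule cSUP_least)
    fix s :: real
    assume s: "s \<in> {0..}"
    have "c * h (inf a (s *\<^sub>R v)) = h (c *\<^sub>R inf a (s *\<^sub>R v))"
      using linear_scale[OF positive_functional_linear[OF h]] by simp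
    also have "\<dots> = h (inf (c *\<^sub>R a) ((c * s) *\<^sub>R v))"
      using c by (simp add: scaleR_inf_distrib)
    also have "\<dots> \<le> band_restrict_pos h v (c *\<^sub>R a)"
      using s c a by (intro band_restrict_pos_ge) (auto simp: scaleR_nonneg_nonneg)
    finally show "h (inf a (s *\<^sub>R v)) \<le> band_restrict_pos h v (c *\<^sub>R a) / c"
      using c by (simp add: field_simps)
  qed simp
  then show ?thesis using c by (simp add: field_simps)
qed

lemma band_restrict_pos_scaleR:
  assumes c: "0 \<le> c" and a: "0 \<le> a"
  shows "band_restrict_pos h v (c *\<^sub>R a) = c * band_restrict_pos h v a"
proof (cases "c = 0")
  case False
  with c have c: "0 < c" by simp
  have "(1 / c) * band_restrict_pos h v (c *\<^sub>R a) \<le> band_restrict_pos h v a"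
    using band_restrict_pos_scaleR_ge[of "1 / c" "c *\<^sub>R a"] scaleR_nonneg_nonneg[of c a] c a
    by simp
  then show ?thesis
    using band_restrict_pos_scaleR_ge[OF c a] c by (simp add: field_simps)
qed (simp add: band_restrict_pos_zero)

lemma band_restrict_diff:
  assumes a: "0 \<le> a" and b: "0 \<le> b"
  shows "band_restrict h v (a - b) = band_restrict_pos h v a - band_restrict_pos h v b"
proof -
  have "pprt (a - b) + b = a + - nprt (a - b)"
    using prts[of "a - b"] by (simp add: algebra_simps)
  then have "band_restrict_pos h v (pprt (a - b)) + band_restrict_pos h v b =
      band_restrict_pos h v a + band_restrict_pos h v (- nprt (a - b))"
    using a b by (metis band_restrict_pos_add neg_0_le_iff_le nprt_le_zero zero_le_pprt)
  then show ?thesis by (simp add: band_restrict_def)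
qed

lemma band_restrict_eq_pos: "0 \<le> y \<Longrightarrow> band_restrict h v y = band_restrict_pos h v y"
  by (simp add: band_restrict_def band_restrict_pos_zero)

lemma band_restrict_minus: "band_restrict h v (- y) = - band_restrict h v y"
  by (simp add: band_restrict_def pprt_neg nprt_neg)

lemma band_restrict_add: "band_restrict h v (y + z) = band_restrict h v y + band_restrict h v z"
proof -
  have "y + z = (pprt y + pprt z) - (- nprt y + - nprt z)"
    by (simp only: add_diff_add pprt_diff_neg_nprt)
  then have "band_restrict h v (y + z) =
      band_restrict_pos h v (pprt y + pprt z) - band_restrict_pos h v (- nprt y + - nprt z)"
    by (simp only:) (rule band_restrict_diff; rule add_nonneg_nonneg; simp)
  then show ?thesis
    using band_restrict_pos_add[of "pprt y" "pprt z"] band_restrict_pos_add[of "- nprt y" "- nprt z"]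
    by (simp add: band_restrict_def)
qed

lemma band_restrict_scaleR: "band_restrict h v (c *\<^sub>R y) = c * band_restrict h v y"
proof -
  have nonneg: "band_restrict h v (c *\<^sub>R y) = c * band_restrict h v y" if "0 \<le> c" for c
  proof -
    have "c *\<^sub>R y = c *\<^sub>R pprt y - c *\<^sub>R (- nprt y)"
      by (metis pprt_diff_neg_nprt scaleR_diff_right)
    then have "band_restrict h v (c *\<^sub>R y) =
        band_restrict_pos h v (c *\<^sub>R pprt y) - band_restrict_pos h v (c *\<^sub>R (- nprt y))"
      by (simp only:) (rule band_restrict_diff; rule scaleR_nonneg_nonneg[OF that]; simp)
    then show ?thesis
      using band_restrict_pos_scaleR[OF that, of "pprt y"] band_restrict_pos_scaleR[OF that, of "- nprt y"]
      by (simp add: band_restrict_def right_diff_distrib)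
  qed
  show ?thesis
  proof (cases "0 \<le> c")
    case False
    then have "band_restrict h v ((- c) *\<^sub>R y) = (- c) * band_restrict h v y"
      using nonneg[of "- c"] by simp
    then show ?thesis
      using band_restrict_minus[of "(- c) *\<^sub>R y"] by simp
  qed (rule nonneg)
qed

lemma band_restrict_linear: "linear (band_restrict h v)"
  by (rule linearI) (simp_all add: band_restrict_add band_restrict_scaleR)

lemma band_restrict_positive: "positive_functional (band_restrict h v)"
proof -
  obtain K where K: "\<And>x. norm (h x) \<le> norm x * K"
    using bounded_linear.bounded[OF positive_functional_bounded_linear[OF h]] by blast
  have dom: "\<bar>band_restrict h v c\<bar> \<le> h c" if "0 \<le> c" for c
    using that band_restrict_pos_nonneg band_restrict_pos_le
    by (simp add: band_restrict_eq_pos)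
  have "norm (band_restrict h v x) \<le> norm x * K" for x
  proof -
    have "\<bar>band_restrict h v x\<bar> \<le> h (lat_abs x)"
      by (rule linear_abs_le_dominating[OF band_restrict_linear positive_functional_linear[OF h] dom])
        simp_all
    also have "\<dots> \<le> norm x * K"
      using K[of "lat_abs x"] by (simp add: norm_lat_abs)
    finally show ?thesis by simp
  qed
  then have "bounded_linear (band_restrict h v)"
    using band_restrict_linear by (auto simp: bounded_linear_def bounded_linear_axioms_def)
  then show ?thesis
    by (simp add: positive_functional_def band_restrict_eq_pos band_restrict_pos_nonneg)
qed

end

section \<open>Disjoint and weak* null band restrictions\<close>

lemma dual_abs_positive:
  assumes "positive_functional f" "0 \<le> y"
  shows "dual_abs f y = f y"
  unfolding dual_abs_def
proof (rule cSup_eq_maximum)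
  show "f y \<in> f ` {z. lat_abs z \<le> y}"
    using lat_abs_eq_self[OF assms(2)] by auto
qed (auto intro: positive_functional_le_of_lat_abs_le[OF assms(1)])

lemma dual_disjoint_positiveI:
  assumes f: "positive_functional f" and g: "positive_functional g"
    and approx: "\<And>x e. 0 \<le> x \<Longrightarrow> 0 < e \<Longrightarrow> \<exists>y. 0 \<le> y \<and> y \<le> x \<and> f y + g (x - y) < e"
  shows "dual_disjoint f g"
  unfolding dual_disjoint_def
proof (intro allI impI)
  fix x :: 'a
  assume x: "0 \<le> x"
  define S where "S = {y. 0 \<le> y \<and> y \<le> x}"
  have nonneg: "0 \<le> f y + g (x - y)" if "y \<in> S" for y
    using that positive_functional_nonneg[OF f] positive_functional_nonneg[OF g] by (simp add: S_def)
  have "(INF y\<in>S. f y + g (x - y)) \<le> 0"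
  proof (rule field_le_epsilon)
    fix e :: real
    assume "0 < e"
    then obtain y where "y \<in> S" "f y + g (x - y) < e"
      using approx[OF x] unfolding S_def by blast
    then show "(INF y\<in>S. f y + g (x - y)) \<le> 0 + e"
      using cINF_lower[of "\<lambda>y. f y + g (x - y)" S y] nonneg
      by (force intro: bdd_belowI2)
  qed
  moreover have "0 \<le> (INF y\<in>S. f y + g (x - y))"
    using x nonneg by (intro cINF_greatest) (auto simp: S_def)
  moreover have "(INF y\<in>S. dual_abs f y + dual_abs g (x - y)) = (INF y\<in>S. f y + g (x - y))"
    by (rule INF_cong) (auto simp: S_def dual_abs_positive[OF f] dual_abs_positive[OF g])
  ultimately show "(INF y\<in>{y. 0 \<le> y \<and> y \<le> x}. dual_abs f y + dual_abs g (x - y)) = 0"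
    by (simp add: S_def)
qed

lemma band_restrict_dual_disjoint:
  fixes v1 v2 :: "'a::banach_lattice"
  assumes h1: "positive_functional h1" and h2: "positive_functional h2"
    and v1: "0 \<le> v1" and v2: "0 \<le> v2" and disj: "inf v1 v2 = 0"
  shows "dual_disjoint (band_restrict h1 v1) (band_restrict h2 v2)"
proof (rule dual_disjoint_positiveI[OF band_restrict_positive[OF h1 v1] band_restrict_positive[OF h2 v2]])
  fix x :: 'a and e :: real
  assume x: "0 \<le> x" and "0 < e"
  then obtain s where s: "0 \<le> s" and approx: "band_restrict_pos h2 v2 x - e < h2 (inf x (s *\<^sub>R v2))"
    using band_restrict_pos_approx[OF h2 v2] by blast
  define y where "y = inf x (s *\<^sub>R v2)"
  have y: "0 \<le> y" "y \<le> x" "y \<le> s *\<^sub>R v2"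
    using x v2 s by (simp_all add: y_def scaleR_nonneg_nonneg)
  have "inf (s *\<^sub>R v2) (1 *\<^sub>R v1) = 0"
    using inf_scaleR_eq_zero[OF v2 v1 _ s zero_le_one] disj by (simp add: inf_commute)
  then have "inf y v1 = 0"
    using inf_eq_zero_mono[OF y(1,3) v1 order_refl] by simp
  then have "band_restrict h1 v1 y = 0"
    by (simp add: band_restrict_eq_pos[OF h1 v1 y(1)] band_restrict_pos_disjoint[OF h1 v1 y(1)])
  moreover have "band_restrict h2 v2 (x - y) = band_restrict_pos h2 v2 x - h2 y"
    using y s by (simp add: band_restrict_diff[OF h2 v2 x] band_restrict_pos_eq_self[OF h2 v2])
  ultimately have "band_restrict h1 v1 y + band_restrict h2 v2 (x - y) < e"
    using approx by (simp add: y_def)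
  with y show "\<exists>y. 0 \<le> y \<and> y \<le> x \<and> band_restrict h1 v1 y + band_restrict h2 v2 (x - y) < e"
    by blast
qed

lemma weak_star_null_band_restrict:
  assumes "\<And>y. 0 \<le> y \<Longrightarrow> (\<lambda>n. band_restrict_pos (h n) (v n) y) \<longlonglongrightarrow> 0"
  shows "weak_star_null (\<lambda>n. band_restrict (h n) (v n))"
  unfolding weak_star_null_def band_restrict_def
  using tendsto_diff[OF assms assms] by simp

lemma weak_star_null_band_restrict_of_tendsto:
  assumes h: "\<And>n. positive_functional (h n)" and v: "\<And>n. 0 \<le> v n"
    and lim: "\<And>y. 0 \<le> y \<Longrightarrow> (\<lambda>n. h n y) \<longlonglongrightarrow> 0"
  shows "weak_star_null (\<lambda>n. band_restrict (h n) (v n))"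
proof (rule weak_star_null_band_restrict)
  fix y :: 'a
  assume "0 \<le> y"
  then show "(\<lambda>n. band_restrict_pos (h n) (v n) y) \<longlonglongrightarrow> 0"
    using band_restrict_pos_nonneg[OF h v] band_restrict_pos_le[OF h v]
    by (intro real_tendsto_sandwich[OF _ _ tendsto_const lim]) auto
qed

lemma disjoint_seq_nonnegD:
  "disjoint_seq v \<Longrightarrow> 0 \<le> v n \<Longrightarrow> 0 \<le> v m \<Longrightarrow> n \<noteq> m \<Longrightarrow> inf (v n) (v m) = 0"
  unfolding disjoint_seq_def by (metis lat_abs_eq_self)

lemma sum_band_restrict_pos_le:
  assumes h: "positive_functional h" and v: "\<And>n. 0 \<le> v n" and disj: "disjoint_seq v"
    and y: "0 \<le> y"
  shows "(\<Sum>n<N. band_restrict_pos h (v n) y) \<le> h y"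
  using y
proof (induction N arbitrary: y)
  case 0
  then show ?case by (simp add: positive_functional_nonneg[OF h])
next
  case (Suc N)
  show ?case
  proof (rule field_le_epsilon)
    fix e :: real
    assume "0 < e"
    then obtain s where s: "0 \<le> s"
      and approx: "band_restrict_pos h (v N) y - e < h (inf y (s *\<^sub>R v N))"
      using band_restrict_pos_approx[OF h v Suc.prems] by blast
    define z where "z = inf y (s *\<^sub>R v N)"
    have z: "0 \<le> z" "z \<le> y" "z \<le> s *\<^sub>R v N"
      using Suc.prems v s by (simp_all add: z_def scaleR_nonneg_nonneg)
    have "band_restrict_pos h (v n) y = band_restrict_pos h (v n) (y - z)" if "n < N" for n
    proof -
      have "inf (s *\<^sub>R v N) (1 *\<^sub>R v n) = 0"
        using inf_scaleR_eq_zero[OF v v disjoint_seq_nonnegD[OF disj v v] s zero_le_one] that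
        by simp
      then have "inf z (v n) = 0"
        using inf_eq_zero_mono[OF z(1,3) v order_refl] by simp
      then show ?thesis
        using band_restrict_pos_add[OF h v z(1), of "y - z"] z
        by (simp add: band_restrict_pos_disjoint[OF h v z(1)])
    qed
    then have "(\<Sum>n<N. band_restrict_pos h (v n) y) = (\<Sum>n<N. band_restrict_pos h (v n) (y - z))"
      by simp
    also have "\<dots> \<le> h (y - z)"
      using z by (intro Suc.IH) simp
    also have "\<dots> = h y - h z"
      by (rule linear_diff[OF positive_functional_linear[OF h]])
    finally show "(\<Sum>n<Suc N. band_restrict_pos h (v n) y) \<le> h y + e"
      using approx by (simp add: z_def)
  qed
qed

lemma weak_star_null_band_restrict_disjoint:
  assumes h: "positive_functional h" and v: "\<And>n. 0 \<le> v n" and disj: "disjoint_seq v"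
  shows "weak_star_null (\<lambda>n. band_restrict h (v n))"
proof (rule weak_star_null_band_restrict)
  fix y :: 'a
  assume y: "0 \<le> y"
  have "summable (\<lambda>n. band_restrict_pos h (v n) y)"
    using band_restrict_pos_nonneg[OF h v y] sum_band_restrict_pos_le[OF h v disj y]
    by (intro summableI_nonneg_bounded[where x = "h y"]) auto
  then show "(\<lambda>n. band_restrict_pos h (v n) y) \<longlonglongrightarrow> 0"
    by (rule summable_LIMSEQ_zero)
qed

lemma sym_kform_linear_slot:
  "sym_kform k A \<Longrightarrow> length xs = k \<Longrightarrow> i < k \<Longrightarrow> linear (\<lambda>y. A (xs[i := y]))"
  unfolding sym_kform_def by blast

lemma positive_kform_nonneg:
  "positive_kform k A \<Longrightarrow> length ys = k \<Longrightarrow> (\<And>y. y \<in> set ys \<Longrightarrow> 0 \<le> y) \<Longrightarrow> 0 \<le> A ys"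
  unfolding positive_kform_def by blast

lemma positive_kform_abs_le_agreeing:
  fixes A :: "'a::banach_lattice list \<Rightarrow> real"
  assumes A: "positive_kform k A"
    and "length xs = k" "length ys = k"
    and "\<And>i. i < k \<Longrightarrow> lat_abs (xs ! i) \<le> ys ! i"
    and "\<And>i. m \<le> i \<Longrightarrow> i < k \<Longrightarrow> xs ! i = ys ! i"
  shows "\<bar>A xs\<bar> \<le> A ys"
  using assms(2-)
  \<comment> \<open>the first \<open>m\<close> slots, where \<open>xs\<close> and \<open>ys\<close> may differ, are exchanged one at a time\<close>
proof (induction m arbitrary: xs ys)
  case 0
  then have "xs = ys"
    by (intro nth_equalityI) auto
  moreover have "0 \<le> A ys"
    using 0 by (intro positive_kform_nonneg[OF A]) (auto simp: in_set_conv_nth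
        intro: order_trans[OF lat_abs_nonneg])
  ultimately show ?case by simp
next
  case (Suc m)
  show ?case
  proof (cases "m < k")
    case False
    then show ?thesis using Suc by (intro Suc.IH) auto
  next
    case True
    have sym: "sym_kform k A"
      using A by (simp add: positive_kform_def)
    have dom: "\<bar>A (xs[m := c])\<bar> \<le> A (ys[m := c])" if "0 \<le> c" for c
      using Suc.prems True that by (intro Suc.IH) (auto simp: nth_list_update lat_abs_eq_self)
    have "\<bar>A (xs[m := xs ! m])\<bar> \<le> A (ys[m := ys ! m])"
      using Suc.prems True
      by (intro linear_abs_le_dominating[OF sym_kform_linear_slot[OF sym] sym_kform_linear_slot[OF sym] dom])
        simp_all
    then show ?thesis by simp
  qed
qed

lemma positive_kform_abs_le:
  fixes A :: "'a::banach_lattice list \<Rightarrow> real"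
  assumes "positive_kform k A" "length xs = k" "length ys = k"
    and "\<And>i. i < k \<Longrightarrow> lat_abs (xs ! i) \<le> ys ! i"
  shows "\<bar>A xs\<bar> \<le> A ys"
  using assms by (intro positive_kform_abs_le_agreeing[where m = k]) auto

lemma positive_kform_fix_last:
  assumes A: "positive_kform (Suc k) A" and y: "0 \<le> y"
  shows "positive_kform k (\<lambda>zs. A (zs @ [y]))"
proof -
  have sym: "sym_kform (Suc k) A"
    using A by (simp add: positive_kform_def)
  then obtain C where C: "\<And>xs. length xs = Suc k \<Longrightarrow> \<bar>A xs\<bar> \<le> C * prod_list (map norm xs)"
    unfolding sym_kform_def by blast
  have "sym_kform k (\<lambda>zs. A (zs @ [y]))"
    unfolding sym_kform_def
  proof (intro conjI allI impI exI)
    fix xs :: "'a list" and i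
    assume "length xs = k" "i < k"
    then show "linear (\<lambda>z. A (xs[i := z] @ [y]))"
      using sym_kform_linear_slot[OF sym, of "xs @ [y]" i] by (simp add: list_update_append1)
  next
    fix xs :: "'a list"
    assume "length xs = k"
    then show "\<bar>A (xs @ [y])\<bar> \<le> (C * norm y) * prod_list (map norm xs)"
      using C[of "xs @ [y]"] by (simp add: ac_simps)
  next
    fix xs ys :: "'a list"
    assume "length xs = k" "mset ys = mset xs"
    then show "A (ys @ [y]) = A (xs @ [y])"
      using sym unfolding sym_kform_def by (metis length_append_singleton mset_append)
  qed
  with A y show ?thesis
    by (auto simp: positive_kform_def)
qed

lemma positive_kform_last_slot:
  fixes A :: "'a::banach_lattice list \<Rightarrow> real"
  assumes A: "positive_kform (Suc k) A" and "length us = k" and us: "\<And>u. u \<in> set us \<Longrightarrow> 0 \<le> u"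
  shows "positive_functional (\<lambda>y. A (us @ [y]))"
proof -
  have sym: "sym_kform (Suc k) A"
    using A by (simp add: positive_kform_def)
  then obtain C where C: "\<And>xs. length xs = Suc k \<Longrightarrow> \<bar>A xs\<bar> \<le> C * prod_list (map norm xs)"
    unfolding sym_kform_def by blast
  have "linear (\<lambda>y. A ((us @ [0]) [k := y]))"
    using assms(2) by (intro sym_kform_linear_slot[OF sym]) auto
  then have "linear (\<lambda>y. A (us @ [y]))"
    using assms(2) by (simp add: list_update_append)
  moreover have "norm (A (us @ [y])) \<le> norm y * (C * prod_list (map norm us))" for y
    using C[of "us @ [y]"] assms(2) by (simp add: ac_simps)
  ultimately have "bounded_linear (\<lambda>y. A (us @ [y]))"
    by (auto simp: bounded_linear_def bounded_linear_axioms_def)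
  moreover have "0 \<le> A (us @ [y])" if "0 \<le> y" for y
    using that us assms(2) by (intro positive_kform_nonneg[OF A]) auto
  ultimately show ?thesis
    by (simp add: positive_functional_def)
qed

section \<open>Disjoint almost limited sequences\<close>

lemma almost_limited_diag_tendsto:
  assumes "almost_limited (range x)" "\<And>n. bounded_linear (f n)"
    and "dual_disjoint_seq f" "weak_star_null f"
  shows "(\<lambda>n. f n (x n)) \<longlonglongrightarrow> 0"
proof (rule LIMSEQ_I)
  fix e :: real
  assume "0 < e"
  with assms have "\<forall>\<^sub>F n in sequentially. \<forall>b\<in>range x. \<bar>f n b\<bar> < e"
    unfolding almost_limited_def by blast
  then obtain N where "\<And>n. N \<le> n \<Longrightarrow> \<bar>f n (x n)\<bar> < e"
    unfolding eventually_sequentially by blast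
  then show "\<exists>N. \<forall>n\<ge>N. norm (f n (x n) - 0) < e"
    by auto
qed

lemma band_restrict_pprt_self:
  assumes h: "positive_functional h"
  shows "band_restrict h (pprt y) y = h (pprt y)"
proof -
  have "band_restrict_pos h (pprt y) (pprt y) = h (pprt y)"
    by (rule band_restrict_pos_eq_self[OF h zero_le_pprt zero_le_pprt zero_le_one]) simp
  moreover have "band_restrict_pos h (pprt y) (- nprt y) = 0"
    by (rule band_restrict_pos_disjoint[OF h zero_le_pprt]) (simp_all add: inf_pprt_neg_nprt inf_commute)
  ultimately show ?thesis
    by (simp add: band_restrict_def)
qed

lemma band_restrict_neg_nprt_self:
  assumes h: "positive_functional h"
  shows "band_restrict h (- nprt y) y = - h (- nprt y)"
  using band_restrict_pprt_self[OF h, of "- y"] band_restrict_minus[OF h, of "- nprt y" y]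
  by (simp add: pprt_neg)

lemma disjoint_seq_pprt: "disjoint_seq x \<Longrightarrow> disjoint_seq (\<lambda>n. pprt (x n))"
  unfolding disjoint_seq_def
  by (auto simp: lat_abs_eq_self intro: inf_eq_zero_mono[OF _ pprt_le_lat_abs _ pprt_le_lat_abs])

lemma disjoint_seq_neg_nprt: "disjoint_seq x \<Longrightarrow> disjoint_seq (\<lambda>n. - nprt (x n))"
  unfolding disjoint_seq_def
  by (auto simp: lat_abs_eq_self intro: inf_eq_zero_mono[OF _ neg_nprt_le_lat_abs _ neg_nprt_le_lat_abs])

lemma band_restrict_diag_tendsto:
  assumes "almost_limited (range x)" and h: "\<And>n. positive_functional (h n)"
    and v: "\<And>n. 0 \<le> v n" and "disjoint_seq v"
    and "weak_star_null (\<lambda>n. band_restrict (h n) (v n))"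
  shows "(\<lambda>n. band_restrict (h n) (v n) (x n)) \<longlonglongrightarrow> 0"
proof (rule almost_limited_diag_tendsto[OF assms(1) _ _ assms(5)])
  show "bounded_linear (band_restrict (h n) (v n))" for n
    by (rule positive_functional_bounded_linear[OF band_restrict_positive[OF h v]])
  show "dual_disjoint_seq (\<lambda>n. band_restrict (h n) (v n))"
    using v disjoint_seq_nonnegD[OF assms(4)]
    by (auto simp: dual_disjoint_seq_def intro: band_restrict_dual_disjoint[OF h h])
qed

context
  fixes x :: "nat \<Rightarrow> 'a::banach_lattice"
  assumes disj: "disjoint_seq x" and lim: "almost_limited (range x)"
begin

lemma positive_functionals_diag_abs_tendsto:
  assumes h: "\<And>n. positive_functional (h n)"
    and null: "\<And>v. (\<And>n. 0 \<le> v n) \<Longrightarrow> disjoint_seq v \<Longrightarrow>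
      weak_star_null (\<lambda>n. band_restrict (h n) (v n))"
  shows "(\<lambda>n. h n (lat_abs (x n))) \<longlonglongrightarrow> 0"
proof -
  have "(\<lambda>n. band_restrict (h n) (pprt (x n)) (x n)) \<longlonglongrightarrow> 0"
    using disjoint_seq_pprt[OF disj]
    by (intro band_restrict_diag_tendsto[OF lim h] null) auto
  then have pos: "(\<lambda>n. h n (pprt (x n))) \<longlonglongrightarrow> 0"
    by (simp add: band_restrict_pprt_self[OF h])
  have "(\<lambda>n. band_restrict (h n) (- nprt (x n)) (x n)) \<longlonglongrightarrow> 0"
    using disjoint_seq_neg_nprt[OF disj]
    by (intro band_restrict_diag_tendsto[OF lim h] null) auto
  then have neg: "(\<lambda>n. h n (- nprt (x n))) \<longlonglongrightarrow> 0"
    using tendsto_minus by (fastforce simp: band_restrict_neg_nprt_self[OF h])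
  have "h n (lat_abs (x n)) = h n (pprt (x n)) + h n (- nprt (x n))" for n
    using linear_add[OF positive_functional_linear[OF h], of n "pprt (x n)" "- nprt (x n)"]
    by (simp add: lat_abs_eq_prts)
  then show ?thesis
    using tendsto_add[OF pos neg] by simp
qed

lemma positive_kform_diag_abs_tendsto:
  "positive_kform (Suc k) A \<Longrightarrow> (\<lambda>n. A (replicate (Suc k) (lat_abs (x n)))) \<longlonglongrightarrow> 0"
proof (induction k arbitrary: A)
  case 0
  have h: "positive_functional (\<lambda>y. A ([] @ [y]))"
    by (rule positive_kform_last_slot[OF 0]) simp_all
  have "(\<lambda>n. A ([] @ [lat_abs (x n)])) \<longlonglongrightarrow> 0"
    by (rule positive_functionals_diag_abs_tendsto[OF h weak_star_null_band_restrict_disjoint[OF h]])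
  then show ?case by simp
next
  case (Suc k)
  define h where "h n y = A (replicate (Suc k) (lat_abs (x n)) @ [y])" for n y
  have h_pos: "positive_functional (h n)" for n
    unfolding h_def by (rule positive_kform_last_slot[OF Suc.prems]) (auto simp: lat_abs_nonneg)
  have "(\<lambda>n. h n y) \<longlonglongrightarrow> 0" if "0 \<le> y" for y
    using Suc.IH[OF positive_kform_fix_last[OF Suc.prems that]] by (simp add: h_def)
  then have "(\<lambda>n. h n (lat_abs (x n))) \<longlonglongrightarrow> 0"
    by (intro positive_functionals_diag_abs_tendsto[OF h_pos]
        weak_star_null_band_restrict_of_tendsto[OF h_pos])
  then show ?case
    by (simp add: h_def replicate_append_same flip: replicate_Suc)
qed

lemma positive_hom_poly_tendsto:
  assumes "positive_hom_poly Q"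
  shows "(\<lambda>n. Q (x n)) \<longlonglongrightarrow> 0"
proof -
  obtain k A where k: "1 \<le> k" and A: "positive_kform k A" and Q: "\<And>y. Q y = A (replicate k y)"
    using assms unfolding positive_hom_poly_def by blast
  from k obtain j where j: "k = Suc j"
    by (cases k) auto
  show ?thesis
  proof (rule Lim_null_comparison)
    have "\<bar>Q (x n)\<bar> \<le> A (replicate k (lat_abs (x n)))" for n
      unfolding Q by (rule positive_kform_abs_le[OF A]) simp_all
    then show "\<forall>\<^sub>F n in sequentially. norm (Q (x n)) \<le> A (replicate k (lat_abs (x n)))"
      by simp
    show "(\<lambda>n. A (replicate k (lat_abs (x n)))) \<longlonglongrightarrow> 0"
      using positive_kform_diag_abs_tendsto[OF A[unfolded j]] by (simp add: j)
  qed
qed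

lemma positive_poly_tendsto:
  assumes "positive_poly P"
  shows "(\<lambda>n. P (x n)) \<longlonglongrightarrow> 0"
proof -
  obtain Ps where Ps: "\<forall>Q\<in>set Ps. positive_hom_poly Q" and P: "\<And>y. P y = (\<Sum>Q\<leftarrow>Ps. Q y)"
    using assms unfolding positive_poly_def by blast
  from Ps have "(\<lambda>n. \<Sum>Q\<leftarrow>Ps. Q (x n)) \<longlonglongrightarrow> 0"
  proof (induction Ps)
    case (Cons Q Ps)
    then have "positive_hom_poly Q" "(\<lambda>n. \<Sum>Q\<leftarrow>Ps. Q (x n)) \<longlonglongrightarrow> 0"
      by simp_all
    then show ?case
      by simp (rule tendsto_add_zero[OF positive_hom_poly_tendsto])
  qed simp
  then show ?thesis
    by (simp add: P)
qed

end

theorem mainTheorem16: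
  fixes P :: "'a::banach_lattice \<Rightarrow> real" and x :: "nat \<Rightarrow> 'a"
  assumes "regular_poly P"
    and "disjoint_seq x"
    and "almost_limited (range x)"
    and "weakly_null x"
  shows "(\<lambda>m. P (x m)) \<longlonglongrightarrow> 0"
proof -
  obtain P1 P2 where "positive_poly P1" "positive_poly P2" and P: "\<And>y. P y = P1 y - P2 y"
    using assms(1) unfolding regular_poly_def by blast
  then have "(\<lambda>m. P1 (x m) - P2 (x m)) \<longlonglongrightarrow> 0 - 0"
    by (intro tendsto_diff positive_poly_tendsto[OF assms(2,3)])
  then show ?thesis by (simp add: P)
qed

end
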